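(* Let $d\ge1$, for every $S\subseteq\{1,\dots,d\}$ let $\hat p_S$ be a probability density on $\mathbb{R}^S$, and let $\hat m:\mathbb{R}^d\to\mathbb{R}$ be written as $\hat m(x)=\sum_{S\subseteq\{1,\dots,d\}}\hat m^\ast_S(x_S)$ with functions $\hat m^\ast_S:\mathbb{R}^S\to\mathbb{R}$ satisfying, for every $S\subseteq\{1,\dots,d\}$, $$\sum_{T:\ T\cap S\neq\emptyset}\int \hat m^\ast_T(x_T)\,\hat p_S(x_S)\,\mathrm dx_S=0 .$$ For $x_0\in\mathbb{R}^d$ define the value function $v_{x_0}(S)=\left.\int \hat m(x)\,\hat p_{-S}(x_{-S})\,\mathrm dx_{-S}\right|_{x=x_0}$ and the interventional SHAP values $$\phi_k(x_0)=\sum_{S\subseteq\{1,\dots,d\}\setminus\{k\}}\frac{|S|!\,(d-|S|-1)!}{d!}\big(v_{x_0}(S\cup\{k\})-v_{x_0}(S)\big),\qquad k=1,\dots,d.$$ Then for every $k\in\{1,\dots,d\}$ and $x\in\mathbb{R}^d$, $$\phi_k(x)=\sum_{S\subseteq\{1,\dots,d\}:\ k\in S}\frac{1}{|S|}\,\hat m^\ast_S(x_S)=\hat m^\ast_k(x_k)+\frac12\sum_{j\neq k}\hat m^\ast_{kj}(x_{kj})+\cdots+\frac1d\,\hat m^\ast_{1,\dots,d}(x_{1,\dots,d}).$$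
   Context: For $S\subseteq\{1,\dots,d\}$, $x_S=(x_k)_{k\in S}$, $-S=\{1,\dots,d\}\setminus S$, and $\mathrm dx_S$ denotes integration over the coordinates in $S$ (for the empty set the integral is the identity). $\hat m^\ast_\emptyset$ is a constant. All integrals appearing are assumed to exist and be finite. *)

theory Defs
  imports "HOL-Analysis.Analysis"
begin

text \<open>Points of R^S (S a set of coordinate indices) are represented as functions
  nat => real; R^S carries the product Lebesgue measure.\<close>

definition coord_space :: "nat set \<Rightarrow> (nat \<Rightarrow> real) measure" where
  "coord_space S = PiM S (\<lambda>_. lborel)"

definition merge_coords :: "nat set \<Rightarrow> (nat \<Rightarrow> real) \<Rightarrow> (nat \<Rightarrow> real) \<Rightarrow> (nat \<Rightarrow> real)" where
  "merge_coords S y x = (\<lambda>i. if i \<in> S then y i else x i)"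

definition is_prob_density :: "nat set \<Rightarrow> ((nat \<Rightarrow> real) \<Rightarrow> real) \<Rightarrow> bool" where
  "is_prob_density S f \<longleftrightarrow>
     f \<in> borel_measurable (coord_space S) \<and>
     (\<forall>y\<in>space (coord_space S). 0 \<le> f y) \<and>
     integrable (coord_space S) f \<and>
     integral\<^sup>L (coord_space S) f = 1"

definition value_fun :: "nat \<Rightarrow> (nat set \<Rightarrow> (nat \<Rightarrow> real) \<Rightarrow> real) \<Rightarrow> ((nat \<Rightarrow> real) \<Rightarrow> real)
    \<Rightarrow> (nat \<Rightarrow> real) \<Rightarrow> nat set \<Rightarrow> real" where
  "value_fun d p m x0 S =
     (let C = {1..d} - S in
      integral\<^sup>L (coord_space C) (\<lambda>y. m (merge_coords C y x0) * p C y))"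

definition shap :: "nat \<Rightarrow> (nat set \<Rightarrow> (nat \<Rightarrow> real) \<Rightarrow> real) \<Rightarrow> ((nat \<Rightarrow> real) \<Rightarrow> real)
    \<Rightarrow> (nat \<Rightarrow> real) \<Rightarrow> nat \<Rightarrow> real" where
  "shap d p m x0 k =
     (\<Sum>S\<in>Pow ({1..d} - {k}).
        fact (card S) * fact (d - card S - 1) / fact d *
        (value_fun d p m x0 (insert k S) - value_fun d p m x0 S))"

end

theory Submission
  imports Defs
begin

text \<open>The orthogonality condition kills, in \<open>v\<^sub>x(S)\<close>, every component that involves one of the
  integrated coordinates, so \<open>v\<^sub>x(S) = \<Sum>\<^sub>T\<^sub>\<subseteq>\<^sub>S m\<^sup>*\<^sub>T(x\<^sub>T)\<close>: the components are the Harsanyi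
  dividends of the game \<open>v\<^sub>x\<close>. The Shapley value of a game splits each dividend equally among the
  players of its coalition, because the Shapley weights of the coalitions containing a fixed
  \<open>T - {k}\<close> sum to \<open>1/|T|\<close>.\<close>

definition shapley_weight :: "nat \<Rightarrow> nat \<Rightarrow> real" where
  "shapley_weight n s = fact s * fact (n - s - 1) / fact n"

definition shapley_value :: "'a set \<Rightarrow> ('a set \<Rightarrow> real) \<Rightarrow> 'a \<Rightarrow> real" where
  "shapley_value N v k =
     (\<Sum>S\<in>Pow (N - {k}). shapley_weight (card N) (card S) * (v (insert k S) - v S))"

lemma sum_Pow_insert:
  assumes "finite S" and "k \<notin> S"
  shows "(\<Sum>T\<in>Pow (insert k S). g T) = (\<Sum>T\<in>Pow S. g T) + (\<Sum>U\<in>Pow S. g (insert k U))"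
proof -
  have "inj_on (insert k) (Pow S)"
    using assms(2) unfolding inj_on_def by (metis PowD insert_ident subsetD)
  moreover have "Pow S \<inter> insert k ` Pow S = {}"
    using assms(2) by auto
  ultimately show ?thesis
    using assms(1) by (simp add: Pow_insert sum.union_disjoint sum.reindex)
qed

lemma shapley_weight_Suc:
  assumes "s < n"
  shows "shapley_weight (Suc n) s + shapley_weight (Suc n) (Suc s) = shapley_weight n s"
proof -
  obtain r where n: "n = Suc (s + r)" using less_imp_Suc_add[OF assms] by blast
  have "shapley_weight (Suc n) s + shapley_weight (Suc n) (Suc s)
      = (fact s * fact (Suc r) + fact (Suc s) * fact r) / fact (Suc n)"
    by (simp add: shapley_weight_def n add_divide_distrib)
  also have "fact s * fact (Suc r) + fact (Suc s) * fact r = real (Suc n) * (fact s * fact r :: real)"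
    unfolding fact_Suc n by (simp add: algebra_simps)
  also have "\<dots> / fact (Suc n) = fact s * fact r / fact n"
    unfolding fact_Suc[of n] by simp
  also have "\<dots> = shapley_weight n s"
    by (simp add: shapley_weight_def n)
  finally show ?thesis .
qed

text \<open>The summands are the Beta values \<open>B(a + |B| + 1, |R| - |B| + 1)\<close>, so the sum is
  \<open>\<integral>\<^sub>0\<^sup>1 t\<^sup>a (t + (1 - t))\<^bsup>|R|\<^esup> dt\<close>.\<close>
lemma sum_Pow_shapley_weight:
  assumes "finite R"
  shows "(\<Sum>B\<in>Pow R. shapley_weight (a + card R + 1) (a + card B)) = 1 / real (a + 1)"
  using assms
proof (induction R rule: finite_induct)
  case empty
  show ?case by (simp add: shapley_weight_def divide_simps)
next
  case (insert x R)
  have card_insert: "card (insert x B) = Suc (card B)" if "B \<in> Pow R" for B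
    using that insert.hyps by (metis PowD card_insert_disjoint finite_subset subsetD)
  have "(\<Sum>B\<in>Pow (insert x R). shapley_weight (a + card (insert x R) + 1) (a + card B))
      = (\<Sum>B\<in>Pow R. shapley_weight (Suc (a + card R + 1)) (a + card B)
                   + shapley_weight (Suc (a + card R + 1)) (Suc (a + card B)))"
    using insert.hyps by (simp add: sum_Pow_insert card_insert sum.distrib)
  also have "\<dots> = (\<Sum>B\<in>Pow R. shapley_weight (a + card R + 1) (a + card B))"
    using insert.hyps by (intro sum.cong refl shapley_weight_Suc) (simp add: card_mono less_Suc_eq_le)
  finally show ?case using insert.IH by simp
qed

lemma sum_shapley_weight_supersets:
  assumes "finite M" and "U \<subseteq> M"
  shows "(\<Sum>S\<in>{S\<in>Pow M. U \<subseteq> S}. shapley_weight (card M + 1) (card S)) = 1 / real (card U + 1)"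
proof -
  have finite_U: "finite U" using assms finite_subset by blast
  have card_M: "card M = card U + card (M - U)"
    using assms finite_U by (simp add: card_Diff_subset card_mono)
  have card_superset: "card S = card U + card (S - U)" if "U \<subseteq> S" "S \<subseteq> M" for S
    using that assms(1) finite_U by (simp add: card_Diff_subset card_mono finite_subset)
  have "(\<Sum>S\<in>{S\<in>Pow M. U \<subseteq> S}. shapley_weight (card M + 1) (card S))
      = (\<Sum>B\<in>Pow (M - U). shapley_weight (card U + card (M - U) + 1) (card U + card B))"
  proof (rule sum.reindex_bij_witness[where i = "(\<union>) U" and j = "\<lambda>S. S - U"])
    fix S assume "S \<in> {S\<in>Pow M. U \<subseteq> S}"
    then show "U \<union> (S - U) = S" and "S - U \<in> Pow (M - U)"
      and "shapley_weight (card U + card (M - U) + 1) (card U + card (S - U))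
         = shapley_weight (card M + 1) (card S)"
      by (auto simp: card_M card_superset[symmetric])
  next
    fix B assume "B \<in> Pow (M - U)"
    then show "U \<union> B - U = B" and "U \<union> B \<in> {S\<in>Pow M. U \<subseteq> S}"
      using assms(2) by auto
  qed
  also have "\<dots> = 1 / real (card U + 1)"
    using sum_Pow_shapley_weight[of "M - U" "card U"] assms(1) by simp
  finally show ?thesis .
qed

lemma shapley_value_dividends:
  assumes "finite N" and "k \<in> N"
    and game: "\<And>S. S \<subseteq> N \<Longrightarrow> v S = (\<Sum>T\<in>Pow S. g T)"
  shows "shapley_value N v k = (\<Sum>T\<in>{T\<in>Pow N. k \<in> T}. g T / real (card T))"
proof -
  define M where "M = N - {k}"
  have finite_M: "finite M" using assms(1) by (simp add: M_def)
  have card_N: "card N = card M + 1"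
    using card_Suc_Diff1[OF assms(1,2)] by (simp add: M_def)
  have marginal: "v (insert k S) - v S = (\<Sum>U\<in>Pow S. g (insert k U))" if "S \<in> Pow M" for S
  proof -
    have "S \<subseteq> N" "insert k S \<subseteq> N" "k \<notin> S" "finite S"
      using that assms(2) finite_M by (auto simp: M_def finite_subset)
    then show ?thesis by (simp add: game sum_Pow_insert)
  qed
  have "shapley_value N v k
      = (\<Sum>S\<in>Pow M. \<Sum>U\<in>{U\<in>Pow M. U \<subseteq> S}. shapley_weight (card M + 1) (card S) * g (insert k U))"
    unfolding shapley_value_def M_def[symmetric] card_N
    by (intro sum.cong refl) (auto simp: marginal sum_distrib_left intro!: sum.cong)
  also have "\<dots> = (\<Sum>U\<in>Pow M. \<Sum>S\<in>{S\<in>Pow M. U \<subseteq> S}.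
                   shapley_weight (card M + 1) (card S) * g (insert k U))"
    using finite_M by (intro sum.swap_restrict) auto
  also have "\<dots> = (\<Sum>U\<in>Pow M. g (insert k U) *
                   (\<Sum>S\<in>{S\<in>Pow M. U \<subseteq> S}. shapley_weight (card M + 1) (card S)))"
    by (simp add: sum_distrib_left mult.commute)
  also have "\<dots> = (\<Sum>U\<in>Pow M. g (insert k U) / real (card (insert k U)))"
  proof (intro sum.cong refl)
    fix U assume U: "U \<in> Pow M"
    then have "finite U" "k \<notin> U"
      using finite_M by (auto simp: M_def intro: finite_subset)
    then have "card (insert k U) = card U + 1" by simp
    then show "g (insert k U) * (\<Sum>S\<in>{S\<in>Pow M. U \<subseteq> S}. shapley_weight (card M + 1) (card S))
        = g (insert k U) / real (card (insert k U))"
      unfolding sum_shapley_weight_supersets[OF finite_M PowD[OF U]] by simp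
  qed
  also have "\<dots> = (\<Sum>T\<in>{T\<in>Pow N. k \<in> T}. g T / real (card T))"
    by (rule sum.reindex_bij_witness[where j = "insert k" and i = "\<lambda>T. T - {k}"])
      (use assms(2) in \<open>auto simp: M_def\<close>)
  finally show ?thesis .
qed

lemma value_fun_eq_sum_Pow:
  fixes d :: nat and S :: "nat set" and mstar :: "nat set \<Rightarrow> (nat \<Rightarrow> real) \<Rightarrow> real"
  defines "C \<equiv> {1..d} - S"
  assumes "S \<subseteq> {1..d}"
    and density: "integral\<^sup>L (coord_space C) (p C) = 1"
    and m_decomp: "\<And>x. m x = (\<Sum>T\<in>Pow {1..d}. mstar T (restrict x T))"
    and integrable: "\<And>T. T \<subseteq> {1..d} \<Longrightarrow>
           integrable (coord_space C) (\<lambda>y. mstar T (restrict (merge_coords C y x) T) * p C y)"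
    and orthogonal: "(\<Sum>T\<in>{T\<in>Pow {1..d}. T \<inter> C \<noteq> {}}.
           integral\<^sup>L (coord_space C) (\<lambda>y. mstar T (restrict (merge_coords C y x) T) * p C y)) = 0"
  shows "value_fun d p m x S = (\<Sum>T\<in>Pow S. mstar T (restrict x T))"
proof -
  define I where
    "I T = integral\<^sup>L (coord_space C) (\<lambda>y. mstar T (restrict (merge_coords C y x) T) * p C y)" for T
  have finite_S: "finite S" using assms(2) finite_subset by blast
  have "value_fun d p m x S = (\<Sum>T\<in>Pow {1..d}. I T)"
    unfolding value_fun_def Let_def C_def[symmetric] m_decomp sum_distrib_right I_def
    using integrable by (simp add: Bochner_Integration.integral_sum)
  also have "Pow {1..d} = {T\<in>Pow {1..d}. T \<inter> C \<noteq> {}} \<union> Pow S"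
    using assms(2) by (auto simp: C_def)
  also have "(\<Sum>T\<in>\<dots>. I T) = (\<Sum>T\<in>{T\<in>Pow {1..d}. T \<inter> C \<noteq> {}}. I T) + (\<Sum>T\<in>Pow S. I T)"
    using finite_S by (intro sum.union_disjoint) (auto simp: C_def)
  also have "\<dots> = (\<Sum>T\<in>Pow S. I T)"
    using orthogonal by (simp add: I_def)
  also have "\<dots> = (\<Sum>T\<in>Pow S. mstar T (restrict x T))"
  proof (intro sum.cong refl)
    fix T assume "T \<in> Pow S"
    then have "restrict (merge_coords C y x) T = restrict x T" for y
      by (auto simp: C_def merge_coords_def restrict_def fun_eq_iff)
    then show "I T = mstar T (restrict x T)"
      using density by (simp add: I_def)
  qed
  finally show ?thesis .
qed

theorem corollary2:
  fixes d :: nat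
    and p :: "nat set \<Rightarrow> (nat \<Rightarrow> real) \<Rightarrow> real"
    and mstar :: "nat set \<Rightarrow> (nat \<Rightarrow> real) \<Rightarrow> real"
    and m :: "(nat \<Rightarrow> real) \<Rightarrow> real"
  assumes d_pos: "d \<ge> 1"
    and dens: "\<And>S. S \<subseteq> {1..d} \<Longrightarrow> is_prob_density S (p S)"
    and m_decomp: "\<And>x. m x = (\<Sum>T\<in>Pow {1..d}. mstar T (restrict x T))"
    and integrable: "\<And>S T x. S \<subseteq> {1..d} \<Longrightarrow> T \<subseteq> {1..d} \<Longrightarrow>
           integrable (coord_space S) (\<lambda>y. mstar T (restrict (merge_coords S y x) T) * p S y)"
    and ident: "\<And>S x. S \<subseteq> {1..d} \<Longrightarrow>
           (\<Sum>T\<in>{T\<in>Pow {1..d}. T \<inter> S \<noteq> {}}.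
              integral\<^sup>L (coord_space S) (\<lambda>y. mstar T (restrict (merge_coords S y x) T) * p S y)) = 0"
    and k: "k \<in> {1..d}"
  shows "shap d p m x k = (\<Sum>S\<in>{S\<in>Pow {1..d}. k \<in> S}. mstar S (restrict x S) / real (card S))"
proof -
  have "value_fun d p m x S = (\<Sum>T\<in>Pow S. mstar T (restrict x T))" if "S \<subseteq> {1..d}" for S
  proof -
    have "integral\<^sup>L (coord_space ({1..d} - S)) (p ({1..d} - S)) = 1"
      using dens[of "{1..d} - S"] by (simp add: is_prob_density_def)
    then show ?thesis
      by (rule value_fun_eq_sum_Pow[where d = d and p = p and m = m and mstar = mstar and x = x,
            OF that _ m_decomp integrable[OF Diff_subset] ident[OF Diff_subset]])
  qed
  then have "shapley_value {1..d} (value_fun d p m x) k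
      = (\<Sum>T\<in>{T\<in>Pow {1..d}. k \<in> T}. mstar T (restrict x T) / real (card T))"
    using k by (intro shapley_value_dividends) auto
  then show ?thesis
    by (simp add: shap_def shapley_value_def shapley_weight_def)
qed

end
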